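(* Let $(T,\mathcal{F},\mu)$ be a non-atomic measure space with $0<\mu(T)<+\infty$, $E$ a real Banach space, and $f,g:E\to\mathbb{R}$ two functions, with $f$ lower semicontinuous and $g$ continuous, satisfying $$\sup_E f<+\infty,\quad \inf_E g=-\infty,\quad \sup_E g=+\infty$$ and $$\max\left\{\sup_{x\in E}\frac{|f(x)|}{1+\|x\|^p},\ \sup_{x\in E}\frac{|g(x)|}{1+\|x\|^p}\right\}<+\infty$$ for some $p\geq 1$. Assume that $f$ has at most one global minimum and that no zero of $g$ is a global minimum of $f$. For each $u\in L^p(T,E)$ set $$J(u)=\int_T f(u(t))\,d\mu+\left(\int_T g(u(t))\,d\mu\right)^2.$$ Then the restriction of $J$ to any decomposable subset of $L^p(T,E)$ containing the constant functions has no global minima.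
   Context: $L^p(T,E)$ denotes the space of all (equivalence classes of) strongly $\mu$-measurable functions $u:T\to E$ with $\int_T\|u(t)\|^p\,d\mu<+\infty$, normed by $\|u\|=(\int_T\|u(t)\|^p d\mu)^{1/p}$. A set $D\subseteq L^p(T,E)$ is decomposable if for every $u,v\in D$ and every $A\in\mathcal{F}$ the function $t\mapsto \chi_A(t)u(t)+(1-\chi_A(t))v(t)$ belongs to $D$, where $\chi_A$ is the characteristic function of $A$. *)

theory Defs
  imports "HOL-Analysis.Analysis"
begin

definition lower_semicontinuous :: "('a::topological_space \<Rightarrow> real) \<Rightarrow> bool" where
  "lower_semicontinuous f \<longleftrightarrow> (\<forall>a. open {x. a < f x})"

definition non_atomic :: "'t measure \<Rightarrow> bool" where
  "non_atomic M \<longleftrightarrow> (\<forall>A\<in>sets M. 0 < emeasure M A \<longrightarrow>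
      (\<exists>B\<in>sets M. B \<subseteq> A \<and> 0 < emeasure M B \<and> emeasure M B < emeasure M A))"

definition strongly_measurable :: "'t measure \<Rightarrow> ('t \<Rightarrow> 'e::real_normed_vector) \<Rightarrow> bool" where
  "strongly_measurable M u \<longleftrightarrow> (\<exists>s. (\<forall>n. simple_function M (s n)) \<and>
      (\<forall>t\<in>space M. (\<lambda>n. s n t) \<longlonglongrightarrow> u t))"

(* representatives of elements of L^p(T,E) *)
definition Lp_space :: "'t measure \<Rightarrow> real \<Rightarrow> ('t \<Rightarrow> 'e::real_normed_vector) set" where
  "Lp_space M p = {u. strongly_measurable M u \<and>
      (\<integral>\<^sup>+ t. ennreal (norm (u t) powr p) \<partial>M) < \<infinity>}"

definition decomposable :: "'t measure \<Rightarrow> ('t \<Rightarrow> 'e) set \<Rightarrow> bool" where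
  "decomposable M D \<longleftrightarrow> (\<forall>u\<in>D. \<forall>v\<in>D. \<forall>A\<in>sets M.
      (\<lambda>t. if t \<in> A then u t else v t) \<in> D)"

definition J_functional :: "'t measure \<Rightarrow> ('e \<Rightarrow> real) \<Rightarrow> ('e \<Rightarrow> real) \<Rightarrow> ('t \<Rightarrow> 'e) \<Rightarrow> real" where
  "J_functional M f g u = (\<integral>t. f (u t) \<partial>M) + (\<integral>t. g (u t) \<partial>M)\<^sup>2"

end

theory Submission
  imports Defs
begin

text \<open>Let \<open>m = \<mu>(T)\<close>, \<open>S = sup f\<close> and let \<open>u\<close> minimise \<open>J\<close> on \<open>D\<close>. For a set \<open>A\<close> of
  measure \<open>\<delta> > 0\<close> and any \<open>x\<close>, the surjectivity of \<open>g\<close> gives a \<open>y\<close> such that the step function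
  equal to \<open>y\<close> on \<open>A\<close> and to \<open>x\<close> elsewhere has \<open>\<integral> g = 0\<close>; it lies in \<open>D\<close>, so
  \<open>J(u) \<le> m f(x) + \<delta> (S - f(x))\<close>. Non-atomicity makes \<open>\<delta>\<close> arbitrarily small, whence
  \<open>J(u) \<le> m inf f\<close>. Since also \<open>J(u) \<ge> \<integral> f(u) \<ge> m inf f\<close>, both \<open>\<integral> f(u) = m inf f\<close> and
  \<open>\<integral> g(u) = 0\<close>. The first forces \<open>u\<close> to be a.e. equal to the unique minimiser \<open>x\<^sub>0\<close> of \<open>f\<close>,
  and then the second gives \<open>g(x\<^sub>0) = 0\<close>, which is excluded.\<close>

lemma continuous_on_unbounded_surj:
  fixes g :: "'a::real_normed_vector \<Rightarrow> real"
  assumes "continuous_on UNIV g" "\<not> bdd_below (range g)" "\<not> bdd_above (range g)"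
  shows "surj g"
proof -
  have "c \<in> range g" for c
  proof -
    obtain a where a: "g a \<le> c"
      using assms(2) unfolding bdd_below_def by (auto simp: not_le) (metis less_le_not_le nle_le)
    obtain b where b: "c \<le> g b"
      using assms(3) unfolding bdd_above_def by (auto simp: not_le) (metis less_le_not_le nle_le)
    have "connected (range g)"
      using connected_continuous_image[OF assms(1)] by (simp add: connected_UNIV)
    then show ?thesis by (rule connectedD_interval[of _ "g a" "g b"]) (use a b in auto)
  qed
  then show ?thesis by blast
qed

lemma strongly_measurable_borel_measurable:
  "strongly_measurable M u \<Longrightarrow> u \<in> borel_measurable M"
  unfolding strongly_measurable_def
  by (metis borel_measurable_LIMSEQ_metric borel_measurable_simple_function)

lemma lower_semicontinuous_borel_measurable:
  "lower_semicontinuous f \<Longrightarrow> f \<in> borel_measurable borel"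
  unfolding borel_measurable_iff_greater lower_semicontinuous_def by auto

context finite_measure
begin

lemma non_atomic_half_subset:
  assumes "non_atomic M" "A \<in> sets M" "0 < measure M A"
  shows "\<exists>B\<in>sets M. 0 < measure M B \<and> 2 * measure M B \<le> measure M A"
proof -
  obtain B where B: "B \<in> sets M" "B \<subseteq> A" "0 < emeasure M B" "emeasure M B < emeasure M A"
    using assms unfolding non_atomic_def by (auto simp: emeasure_eq_measure)
  then have B_pos: "0 < measure M B" and B_less: "measure M B < measure M A"
    by (auto simp: emeasure_eq_measure ennreal_less_iff)
  show ?thesis
  proof (cases "2 * measure M B \<le> measure M A")
    case True
    then show ?thesis using B(1) B_pos by blast
  next
    case False
    have "measure M (A - B) = measure M A - measure M B"
      using assms(2) B by (simp add: finite_measure_Diff)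
    then show ?thesis
      using False B_less assms(2) B(1) by (intro bexI[of _ "A - B"]) auto
  qed
qed

lemma non_atomic_small_set:
  assumes "non_atomic M" "0 < measure M (space M)" "0 < \<eta>"
  shows "\<exists>A\<in>sets M. 0 < measure M A \<and> measure M A < \<eta>"
proof -
  define m where "m = measure M (space M)"
  have halved: "\<exists>A\<in>sets M. 0 < measure M A \<and> measure M A * 2 ^ n \<le> m" for n
  proof (induction n)
    case 0
    show ?case using assms(2) unfolding m_def by (intro bexI[of _ "space M"]) auto
  next
    case (Suc n)
    then obtain A where A: "A \<in> sets M" "0 < measure M A" "measure M A * 2 ^ n \<le> m" by blast
    then obtain B where B: "B \<in> sets M" "0 < measure M B" "2 * measure M B \<le> measure M A"
      using non_atomic_half_subset[OF assms(1)] by blast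
    have "measure M B * 2 ^ Suc n = (2 * measure M B) * 2 ^ n" by simp
    also have "\<dots> \<le> measure M A * 2 ^ n" using B(3) by (intro mult_right_mono) auto
    finally have "measure M B * 2 ^ Suc n \<le> m" using A(3) by linarith
    then show ?case using B(1,2) by blast
  qed
  obtain n where n: "m / \<eta> < 2 ^ n" using real_arch_pow[of 2 "m / \<eta>"] by auto
  obtain A where A: "A \<in> sets M" "0 < measure M A" "measure M A * 2 ^ n \<le> m"
    using halved by blast
  have "m < \<eta> * 2 ^ n" using n assms(3) by (simp add: field_simps)
  then have "measure M A * 2 ^ n < \<eta> * 2 ^ n" using A(3) by linarith
  then show ?thesis using A(1,2) by auto
qed

lemma integral_step_function:
  fixes h :: "'e \<Rightarrow> real"
  assumes "A \<in> sets M"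
  shows "(\<integral>t. h (if t \<in> A then y else x) \<partial>M)
    = measure M (space M) * h x + measure M A * (h y - h x)"
proof -
  have "(\<lambda>t. h (if t \<in> A then y else x)) = (\<lambda>t. h x + (h y - h x) * indicator A t)"
    by (auto simp: indicator_def)
  moreover have "integrable M (\<lambda>t. (h y - h x) * indicator A t)"
    using assms emeasure_finite[of A] by (simp add: less_top[symmetric])
  ultimately show ?thesis
    using assms by (simp add: Bochner_Integration.integral_add)
qed

lemma integrable_comp_Lp_space:
  fixes h :: "'e::real_normed_vector \<Rightarrow> real"
  assumes "u \<in> Lp_space M p" "h \<in> borel_measurable borel"
    and bound: "\<And>x. \<bar>h x\<bar> \<le> C * (1 + norm x powr p)"
  shows "integrable M (\<lambda>t. h (u t))"
proof (rule Bochner_Integration.integrable_bound)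
  have [measurable]: "u \<in> borel_measurable M"
    using assms(1) strongly_measurable_borel_measurable unfolding Lp_space_def by auto
  have "integrable M (\<lambda>t. norm (u t) powr p)"
    using assms(1) by (intro integrableI_bounded) (auto simp: Lp_space_def)
  then show "integrable M (\<lambda>t. C * (1 + norm (u t) powr p))" by auto
  show "(\<lambda>t. h (u t)) \<in> borel_measurable M" using assms(2) by measurable
  show "AE t in M. norm (h (u t)) \<le> norm (C * (1 + norm (u t) powr p))"
    using bound by (intro AE_I2) (metis abs_ge_self order_trans real_norm_def)
qed

lemma J_minimizer_le_step:
  assumes "decomposable M D" "\<forall>x. (\<lambda>t. x) \<in> D"
    and "u \<in> D" "\<forall>v\<in>D. J_functional M f g u \<le> J_functional M f g v"
    and "surj g" "\<forall>z. f z \<le> S"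
    and "A \<in> sets M" "0 < measure M A"
  shows "J_functional M f g u \<le> measure M (space M) * f x + measure M A * (S - f x)"
proof -
  define m where "m = measure M (space M)"
  define \<delta> where "\<delta> = measure M A"
  obtain y where y: "g y = - (m - \<delta>) * g x / \<delta>" using \<open>surj g\<close> by (metis surjD)
  define v where "v = (\<lambda>t. if t \<in> A then y else x)"
  have "v \<in> D"
    using assms(1,2,7) unfolding decomposable_def v_def by fast
  have "(\<integral>t. g (v t) \<partial>M) = m * g x + \<delta> * (g y - g x)"
    unfolding v_def m_def \<delta>_def by (rule integral_step_function[OF assms(7)])
  also have "\<dots> = 0"
  proof -
    have "\<delta> * g y = - (m - \<delta>) * g x" using assms(8) unfolding y \<delta>_def by simp
    then show ?thesis by (simp add: algebra_simps)
  qed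
  finally have "J_functional M f g v = m * f x + \<delta> * (f y - f x)"
    unfolding J_functional_def v_def m_def \<delta>_def by (simp add: integral_step_function[OF assms(7)])
  also have "\<dots> \<le> m * f x + \<delta> * (S - f x)"
    using assms(6,8) unfolding \<delta>_def by (simp add: mult_left_mono)
  finally show ?thesis using assms(4) \<open>v \<in> D\<close> unfolding m_def \<delta>_def by force
qed

lemma J_minimizer_le_const:
  assumes "non_atomic M" "0 < measure M (space M)"
    and "decomposable M D" "\<forall>x. (\<lambda>t. x) \<in> D"
    and "u \<in> D" "\<forall>v\<in>D. J_functional M f g u \<le> J_functional M f g v"
    and "surj g" "\<forall>z. f z \<le> S"
  shows "J_functional M f g u \<le> measure M (space M) * f x"
proof (rule ccontr)
  define e where "e = J_functional M f g u - measure M (space M) * f x"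
  assume "\<not> ?thesis"
  then have "0 < e" unfolding e_def by simp
  moreover have "f x \<le> S" using assms(8) by simp
  ultimately have "0 < e / (S - f x + 1)" by simp
  then obtain A where A: "A \<in> sets M" "0 < measure M A" "measure M A < e / (S - f x + 1)"
    using non_atomic_small_set[OF assms(1,2)] by blast
  then have "measure M A * (S - f x) + measure M A < e"
    using \<open>f x \<le> S\<close> by (simp add: pos_less_divide_eq algebra_simps)
  then show False
    using J_minimizer_le_step[OF assms(3-8) A(1,2), where x = x] A(2) unfolding e_def by linarith
qed

lemma J_minimizer_le_Inf:
  assumes "non_atomic M" "0 < measure M (space M)"
    and "decomposable M D" "\<forall>x. (\<lambda>t. x) \<in> D"
    and "u \<in> D" "\<forall>v\<in>D. J_functional M f g u \<le> J_functional M f g v"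
    and "surj g" "bdd_above (range f)"
  shows "bdd_below (range f)" "J_functional M f g u \<le> measure M (space M) * Inf (range f)"
proof -
  define m where "m = measure M (space M)"
  have "\<forall>z. f z \<le> Sup (range f)" using assms(8) by (simp add: cSup_upper)
  then have J_le: "J_functional M f g u / m \<le> f x" for x
    using J_minimizer_le_const[OF assms(1-7)] assms(2) unfolding m_def
    by (simp add: pos_divide_le_eq mult.commute)
  then show "bdd_below (range f)" by (intro bdd_belowI2)
  have "J_functional M f g u / m \<le> Inf (range f)" using J_le by (intro cInf_greatest) auto
  then show "J_functional M f g u \<le> m * Inf (range f)"
    using assms(2) unfolding m_def by (simp add: pos_divide_le_eq mult.commute)
qed

lemma integral_eq_Inf_imp_AE_eq_minimizer:
  assumes "0 < measure M (space M)" "bdd_below (range f)"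
    and unique_min: "\<forall>x y. (\<forall>z. f x \<le> f z) \<and> (\<forall>z. f y \<le> f z) \<longrightarrow> x = y"
    and "integrable M (\<lambda>t. f (u t))"
    and "(\<integral>t. f (u t) \<partial>M) = measure M (space M) * Inf (range f)"
  shows "\<exists>x\<^sub>0. (\<forall>z. f x\<^sub>0 \<le> f z) \<and> (AE t in M. u t = x\<^sub>0)"
proof -
  define L where "L = Inf (range f)"
  have fL: "L \<le> f z" for z unfolding L_def using assms(2) by (intro cInf_lower) auto
  have "(\<integral>t. f (u t) - L \<partial>M) = 0" using assms(4,5) unfolding L_def by simp
  then have ae: "AE t in M. f (u t) = L"
    using integral_nonneg_eq_0_iff_AE[of M "\<lambda>t. f (u t) - L"] assms(4) fL by auto
  have "ae_filter M \<noteq> bot"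
    using assms(1) ae_filter_eq_bot_iff[of M] by (simp add: emeasure_eq_measure)
  then obtain t\<^sub>0 where "f (u t\<^sub>0) = L"
    using ae by (auto dest: eventually_happens')
  then have min: "\<forall>z. f (u t\<^sub>0) \<le> f z" using fL by simp
  have "AE t in M. u t = u t\<^sub>0"
    using ae
  proof eventually_elim
    case (elim t)
    then have "\<forall>z. f (u t) \<le> f z" using fL by simp
    then show ?case using unique_min min by blast
  qed
  then show ?thesis using min by blast
qed

end

theorem theorem1p5:
  fixes M :: "'t measure" and f g :: "'e::banach \<Rightarrow> real" and p :: real
  assumes nonatomic: "non_atomic M"
    and pos: "0 < emeasure M (space M)" and fin: "emeasure M (space M) < \<infinity>"
    and lsc: "lower_semicontinuous f" and contg: "continuous_on UNIV g"
    and sup_f: "bdd_above (range f)"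
    and inf_g: "\<not> bdd_below (range g)" and sup_g: "\<not> bdd_above (range g)"
    and p: "p \<ge> 1"
    and growth: "\<exists>C. \<forall>x. \<bar>f x\<bar> \<le> C * (1 + norm x powr p) \<and> \<bar>g x\<bar> \<le> C * (1 + norm x powr p)"
    and unique_min: "\<forall>x y. (\<forall>z. f x \<le> f z) \<and> (\<forall>z. f y \<le> f z) \<longrightarrow> x = y"
    and zeros: "\<forall>x. g x = 0 \<longrightarrow> \<not> (\<forall>z. f x \<le> f z)"
  shows "\<forall>D. D \<subseteq> Lp_space M p \<and> decomposable M D \<and> (\<forall>x. (\<lambda>t. x) \<in> D) \<longrightarrow>
           \<not> (\<exists>u\<in>D. \<forall>v\<in>D. J_functional M f g u \<le> J_functional M f g v)"
proof (intro allI impI notI)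
  fix D :: "('t \<Rightarrow> 'e) set"
  assume D: "D \<subseteq> Lp_space M p \<and> decomposable M D \<and> (\<forall>x. (\<lambda>t. x) \<in> D)"
    and "\<exists>u\<in>D. \<forall>v\<in>D. J_functional M f g u \<le> J_functional M f g v"
  then obtain u where u: "u \<in> D" "\<forall>v\<in>D. J_functional M f g u \<le> J_functional M f g v" by blast
  interpret finite_measure M using fin by (intro finite_measureI) auto
  define m where "m = measure M (space M)"
  have m: "0 < m" using pos unfolding m_def by (simp add: emeasure_eq_measure)
  have "surj g" using continuous_on_unbounded_surj[OF contg inf_g sup_g] .
  then have bdd: "bdd_below (range f)" and J_le_Inf: "J_functional M f g u \<le> m * Inf (range f)"
    using J_minimizer_le_Inf[OF nonatomic m[unfolded m_def] _ _ u] D sup_f unfolding m_def by auto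
  have u_Lp: "u \<in> Lp_space M p" using D u(1) by auto
  have [measurable]: "u \<in> borel_measurable M" "f \<in> borel_measurable borel" "g \<in> borel_measurable borel"
    using u_Lp lsc contg unfolding Lp_space_def
    by (auto simp: strongly_measurable_borel_measurable lower_semicontinuous_borel_measurable
        borel_measurable_continuous_onI)
  obtain C where "\<And>x. \<bar>f x\<bar> \<le> C * (1 + norm x powr p)" using growth by blast
  then have int_f: "integrable M (\<lambda>t. f (u t))"
    by (intro integrable_comp_Lp_space[OF u_Lp]) auto
  have int_f_ge: "m * Inf (range f) \<le> (\<integral>t. f (u t) \<partial>M)"
    using integral_mono[OF integrable_const int_f, of "Inf (range f)"] bdd unfolding m_def
    by (simp add: cInf_lower)
  then have "(\<integral>t. g (u t) \<partial>M)\<^sup>2 \<le> 0" "(\<integral>t. f (u t) \<partial>M) \<le> m * Inf (range f)"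
    using J_le_Inf zero_le_power2[of "\<integral>t. g (u t) \<partial>M"] unfolding J_functional_def by linarith+
  then have int_g_0: "(\<integral>t. g (u t) \<partial>M) = 0" and int_f_Inf: "(\<integral>t. f (u t) \<partial>M) = m * Inf (range f)"
    using int_f_ge by simp_all
  obtain x\<^sub>0 where "\<forall>z. f x\<^sub>0 \<le> f z" "AE t in M. u t = x\<^sub>0"
    using integral_eq_Inf_imp_AE_eq_minimizer[OF _ bdd unique_min int_f] m int_f_Inf
    unfolding m_def by blast
  moreover from this(2) have "(\<integral>t. g (u t) \<partial>M) = (\<integral>t. g x\<^sub>0 \<partial>M)"
    by (intro integral_cong_AE) auto
  then have "g x\<^sub>0 = 0" using m int_g_0 unfolding m_def by simp
  ultimately show False using zeros by blast
qed

end
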